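(* For all sets S and Y, τ : H_{S⊎Y} → H_S is a monad morphism, i.e. τ · η^{S⊎Y} = η^S and τ · f^{*}_{S⊎Y} = (τ · f)^{*}_{S} · τ for every f : X → H_{S⊎Y} Z.
   Context: For a set S, a trajectory over S is a pair ⟨I,e⟩ with I a downset of the extended non-negative reals of the form [0,d] (d a finite non-negative real) or [0,d) (d a non-negative real or ∞), and e : I → S. Let Trj_S be the monoid of trajectories with domain [0,d), d finite, under concatenation ⟨[0,d1),e1⟩⌢⟨[0,d2),e2⟩ = ⟨[0,d1+d2), λt. if t<d1 then e1^t else e2^{t−d1}⟩, with unit the empty trajectory ε = ⟨∅, !⟩. Define H_S X = (Trj_S × X) ∪ (set of all trajectories over S), written as triples ⟨I,e,x⟩ (I of the form [0,d), d finite) and pairs ⟨I,e⟩. This is a monad (generalized writer monad) with unit η^S(x) = ⟨ε,x⟩ and Kleisli lifting f^{*}_S(m,x) = (m⌢n, y) if f(x) = ⟨n,y⟩, f^{*}_S(m,x) = m⌢e if f(x) = e is a trajectory, and f^{*}_S(e) = e for a trajectory e. Define τ : H_{S⊎Y} X → H_S X by τ(I,e,x) = ⟨I,e',x⟩ if I = I', and ⟨I',e'⟩ otherwise; and τ(I,e) = ⟨I',e'⟩, where ⟨I',e'⟩ is the largest trajectory (prefix of ⟨I,e⟩) such that for all t ∈ I', e^t = inl e'^t. *)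

theory Defs
  imports Complex_Main "HOL-Library.FuncSet"
begin

text \<open>Trajectories over a set S (carrier of type 's): a pair (I, e) where I is a downset
of the non-negative reals of the form [0,d] (d finite, d \<ge> 0) or [0,d) (d \<ge> 0 real or
d = \<infinity>, the latter being [0,\<infinity>)), and e : I \<rightarrow> S. The function e is represented as a
total function real \<Rightarrow> 's that is canonically undefined outside I (extensional).\<close>

type_synonym 's trj = "real set \<times> (real \<Rightarrow> 's)"

definition is_dom :: "real set \<Rightarrow> bool" where
  "is_dom I \<longleftrightarrow> (\<exists>d\<ge>0. I = {0..d}) \<or> (\<exists>d\<ge>0. I = {0..<d}) \<or> I = {0..}"

definition is_trj :: "'s set \<Rightarrow> 's trj \<Rightarrow> bool" where
  "is_trj S p \<longleftrightarrow> is_dom (fst p) \<and> (\<forall>t\<in>fst p. snd p t \<in> S)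
                  \<and> (\<forall>t. t \<notin> fst p \<longrightarrow> snd p t = undefined)"

definition is_ftrj :: "'s set \<Rightarrow> 's trj \<Rightarrow> bool" where
  "is_ftrj S p \<longleftrightarrow> is_trj S p \<and> (\<exists>d\<ge>0. fst p = {0..<d})"

definition tlen :: "real set \<Rightarrow> real" where
  "tlen I = (if I = {} then 0 else Sup I)"

text \<open>Concatenation; the first argument has domain [0,d1), the second may be any trajectory.\<close>
definition cat :: "'s trj \<Rightarrow> 's trj \<Rightarrow> 's trj" where
  "cat p q = (let I1 = fst p; e1 = snd p; I2 = fst q; e2 = snd q; d1 = tlen I1 in
     (I1 \<union> (\<lambda>t. t + d1) ` I2,
      \<lambda>t. if t \<in> I1 then e1 t else if t - d1 \<in> I2 then e2 (t - d1) else undefined))"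

definition eps :: "'s trj" where
  "eps = ({}, \<lambda>_. undefined)"

text \<open>H_S X: Res m x  ~  triple \<langle>I,e,x\<rangle>;  Div e  ~  pair \<langle>I,e\<rangle>.\<close>
datatype ('s, 'x) H = Res "'s trj" 'x | Div "'s trj"

definition H_set :: "'s set \<Rightarrow> 'x set \<Rightarrow> ('s, 'x) H set" where
  "H_set S X = {Res m x | m x. is_ftrj S m \<and> x \<in> X} \<union> {Div e | e. is_trj S e}"

definition eta :: "'x \<Rightarrow> ('s, 'x) H" where
  "eta x = Res eps x"

fun kl :: "('x \<Rightarrow> ('s, 'z) H) \<Rightarrow> ('s, 'x) H \<Rightarrow> ('s, 'z) H" where
  "kl f (Res m x) = (case f x of Res n y \<Rightarrow> Res (cat m n) y | Div e \<Rightarrow> Div (cat m e))"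
| "kl f (Div e) = Div e"

definition inl_prefix_ok :: "('s + 'y) trj \<Rightarrow> 's trj \<Rightarrow> bool" where
  "inl_prefix_ok p q \<longleftrightarrow> fst q \<subseteq> fst p \<and> (\<forall>t\<in>fst q. snd p t = Inl (snd q t))"

definition inl_prefix :: "'s set \<Rightarrow> ('s + 'y) trj \<Rightarrow> 's trj" where
  "inl_prefix S p = (THE q. is_trj S q \<and> inl_prefix_ok p q \<and>
      (\<forall>q'. is_trj S q' \<and> inl_prefix_ok p q' \<longrightarrow> fst q' \<subseteq> fst q))"

fun tau :: "'s set \<Rightarrow> ('s + 'y, 'x) H \<Rightarrow> ('s, 'x) H" where
  "tau S (Res m x) = (let q = inl_prefix S m in if fst q = fst m then Res q x else Div q)"
| "tau S (Div e) = Div (inl_prefix S e)"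

end

theory Submission
  imports Defs
begin

text \<open>Write \<open>inl_dom S p\<close> for the set of times t \<ge> 0 such that p is defined with values in
  \<open>Inl ` S\<close> on all of [0,t]; restricting p to it gives the prefix taken by \<open>tau\<close>.
  For concatenation m \<frown> n: if m leaves \<open>Inl ` S\<close> before its end, the prefix of m \<frown> n is that
  of m and is strictly shorter than m \<frown> n, so both sides of the Kleisli law diverge with it;
  otherwise the prefix of m \<frown> n is the prefix of m followed by the prefix of n, and it is all
  of m \<frown> n exactly when the prefix of n is all of n. The unit law holds because the empty
  trajectory is its own prefix.\<close>

lemma is_domI:
  assumes nonneg: "D \<subseteq> {0..}"
    and down: "\<And>t s. t \<in> D \<Longrightarrow> 0 \<le> s \<Longrightarrow> s \<le> t \<Longrightarrow> s \<in> D"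
  shows "is_dom D"
proof -
  consider "D = {}" | "\<not> bdd_above D" | "D \<noteq> {}" "bdd_above D" by blast
  then show ?thesis
  proof cases
    case 1
    then have "D = {0..<0}" by simp
    then show ?thesis unfolding is_dom_def by blast
  next
    case 2
    have "D = {0..}"
    proof
      show "{0..} \<subseteq> D"
      proof
        fix x :: real assume "x \<in> {0..}"
        moreover obtain t where "t \<in> D" "x < t"
          using 2 unfolding bdd_above_def by (meson not_le)
        ultimately show "x \<in> D" using down[of t x] by simp
      qed
    qed (fact nonneg)
    then show ?thesis unfolding is_dom_def by blast
  next
    case 3
    define d where "d = Sup D"
    have lower: "{0..<d} \<subseteq> D"
    proof
      fix x assume "x \<in> {0..<d}"
      moreover obtain t where "t \<in> D" "x < t"
        using less_cSupE[of x D] 3 \<open>x \<in> {0..<d}\<close> d_def by auto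
      ultimately show "x \<in> D" using down[of t x] by simp
    qed
    have upper: "D \<subseteq> {0..d}"
      using nonneg cSup_upper[OF _ \<open>bdd_above D\<close>] d_def by auto
    have "0 \<le> d"
      using 3 upper by fastforce
    moreover have "D = {0..d} \<or> D = {0..<d}"
    proof (cases "d \<in> D")
      case True
      have "{0..d} = insert d {0..<d}"
        using \<open>0 \<le> d\<close> by auto
      then show ?thesis using True lower upper by auto
    next
      case False
      then show ?thesis using lower upper by fastforce
    qed
    ultimately show ?thesis unfolding is_dom_def by blast
  qed
qed

lemma is_trj_nonneg: "is_trj S p \<Longrightarrow> fst p \<subseteq> {0..}"
  unfolding is_trj_def is_dom_def by auto

text \<open>Asking for values in \<open>Inl ` S\<close>, not just for \<open>Inl\<close> values, makes \<open>inl_part S p\<close> the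
  prefix of \<open>inl_prefix S p\<close> for every p, with no hypothesis on the values of p.\<close>

definition inl_dom :: "'s set \<Rightarrow> ('s + 'y) trj \<Rightarrow> real set" where
  "inl_dom S p = {t. 0 \<le> t \<and> (\<forall>s\<in>{0..t}. s \<in> fst p \<and> snd p s \<in> Inl ` S)}"

definition inl_part :: "'s set \<Rightarrow> ('s + 'y) trj \<Rightarrow> 's trj" where
  "inl_part S p = (inl_dom S p, \<lambda>t. if t \<in> inl_dom S p then projl (snd p t) else undefined)"

lemma inl_dom_subset: "inl_dom S p \<subseteq> fst p"
  unfolding inl_dom_def by auto

lemma mem_inl_domD: "t \<in> inl_dom S p \<Longrightarrow> 0 \<le> t \<and> t \<in> fst p \<and> snd p t \<in> Inl ` S"
  unfolding inl_dom_def by auto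

lemma is_trj_inl_part: "is_trj S (inl_part S p)"
proof -
  have "is_dom (inl_dom S p)"
    by (rule is_domI) (auto simp: inl_dom_def)
  then show ?thesis
    unfolding is_trj_def inl_part_def by (auto dest: mem_inl_domD)
qed

lemma inl_prefix_ok_inl_part: "inl_prefix_ok p (inl_part S p)"
  unfolding inl_prefix_ok_def inl_part_def by (auto dest: mem_inl_domD)

lemma inl_prefix_ok_subset_inl_dom:
  assumes q: "is_trj S q" "inl_prefix_ok p q"
  shows "fst q \<subseteq> inl_dom S p"
proof
  fix t assume t: "t \<in> fst q"
  have "s \<in> fst p \<and> snd p s \<in> Inl ` S" if "s \<in> {0..t}" for s
  proof -
    have "s \<in> fst q"
      using q(1) t that unfolding is_trj_def is_dom_def by auto
    then show ?thesis
      using q unfolding is_trj_def inl_prefix_ok_def by auto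
  qed
  moreover have "0 \<le> t"
    using q(1) t unfolding is_trj_def is_dom_def by auto
  ultimately show "t \<in> inl_dom S p"
    unfolding inl_dom_def by blast
qed

lemma inl_prefix_eq_inl_part: "inl_prefix S p = inl_part S p"
  unfolding inl_prefix_def
proof (rule the_equality)
  show "is_trj S (inl_part S p) \<and> inl_prefix_ok p (inl_part S p)
      \<and> (\<forall>q. is_trj S q \<and> inl_prefix_ok p q \<longrightarrow> fst q \<subseteq> fst (inl_part S p))"
    using is_trj_inl_part inl_prefix_ok_inl_part inl_prefix_ok_subset_inl_dom
    unfolding inl_part_def fst_conv by blast
next
  fix q
  assume q: "is_trj S q \<and> inl_prefix_ok p q
      \<and> (\<forall>q'. is_trj S q' \<and> inl_prefix_ok p q' \<longrightarrow> fst q' \<subseteq> fst q)"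
  then have "fst (inl_part S p) \<subseteq> fst q"
    using is_trj_inl_part inl_prefix_ok_inl_part by blast
  with q have dom: "fst q = inl_dom S p"
    using inl_prefix_ok_subset_inl_dom unfolding inl_part_def fst_conv by blast
  show "q = inl_part S p"
  proof (rule prod_eqI)
    show "fst q = fst (inl_part S p)"
      using dom by (simp add: inl_part_def)
    show "snd q = snd (inl_part S p)"
    proof
      fix t
      show "snd q t = snd (inl_part S p) t"
      proof (cases "t \<in> inl_dom S p")
        case True
        then have "snd p t = Inl (snd q t)"
          using q dom unfolding inl_prefix_ok_def by blast
        with True show ?thesis
          unfolding inl_part_def by simp
      next
        case False
        then show ?thesis
          using q dom unfolding inl_part_def is_trj_def by simp
      qed
    qed
  qed
qed

lemma tlen_atLeastLessThan: "0 \<le> d \<Longrightarrow> tlen {0..<d} = d"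
  unfolding tlen_def by (cases "d = 0") auto

lemma fst_cat: "fst (cat p q) = fst p \<union> (\<lambda>t. t + tlen (fst p)) ` fst q"
  unfolding cat_def Let_def by simp

lemma snd_cat:
  "snd (cat p q) t = (if t \<in> fst p then snd p t
     else if t - tlen (fst p) \<in> fst q then snd q (t - tlen (fst p)) else undefined)"
  unfolding cat_def Let_def by simp

lemma mem_translation_iff: "(t::'a::ab_group_add) \<in> (\<lambda>s. s + d) ` A \<longleftrightarrow> t - d \<in> A"
  by force

context
  fixes m :: "('s + 'y) trj" and d :: real
  assumes fst_m: "fst m = {0..<d}" and d_nonneg: "0 \<le> d"
begin

lemma cat_Inl_iff:
  assumes "0 \<le> s"
  shows "s \<in> fst (cat m n) \<and> snd (cat m n) s \<in> Inl ` S \<longleftrightarrow>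
    (if s < d then snd m s \<in> Inl ` S else s - d \<in> fst n \<and> snd n (s - d) \<in> Inl ` S)"
  using assms by (simp add: fst_cat snd_cat fst_m tlen_atLeastLessThan d_nonneg mem_translation_iff)

lemma inl_dom_eq_fst_iff: "inl_dom S m = fst m \<longleftrightarrow> (\<forall>s\<in>{0..<d}. snd m s \<in> Inl ` S)"
proof
  assume "inl_dom S m = fst m"
  then show "\<forall>s\<in>{0..<d}. snd m s \<in> Inl ` S"
    using mem_inl_domD fst_m by blast
next
  assume "\<forall>s\<in>{0..<d}. snd m s \<in> Inl ` S"
  then show "inl_dom S m = fst m"
    unfolding inl_dom_def fst_m by auto
qed

lemma mem_inl_dom_cat_iff:
  "t \<in> inl_dom S (cat m n) \<longleftrightarrow>
    (if t < d then t \<in> inl_dom S m else inl_dom S m = fst m \<and> t - d \<in> inl_dom S n)"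
proof (cases "t < d")
  case True
  then show ?thesis
    unfolding inl_dom_def using cat_Inl_iff by (auto simp: fst_m)
next
  case False
  have "t \<in> inl_dom S (cat m n) \<longleftrightarrow>
      (\<forall>s\<in>{0..t}. if s < d then snd m s \<in> Inl ` S else s - d \<in> fst n \<and> snd n (s - d) \<in> Inl ` S)"
    unfolding inl_dom_def using False d_nonneg cat_Inl_iff by auto
  also have "\<dots> \<longleftrightarrow> (\<forall>s\<in>{0..<d}. snd m s \<in> Inl ` S)
      \<and> (\<forall>u\<in>{0..t - d}. u \<in> fst n \<and> snd n u \<in> Inl ` S)"
    (is "(\<forall>s\<in>{0..t}. ?G s) \<longleftrightarrow> _")
  proof (intro iffI conjI ballI)
    fix s assume "\<forall>s\<in>{0..t}. ?G s" and "s \<in> {0..<d}"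
    then show "snd m s \<in> Inl ` S"
      using False by (auto dest: bspec[of _ _ s])
  next
    fix u assume "\<forall>s\<in>{0..t}. ?G s" and "u \<in> {0..t - d}"
    then show "u \<in> fst n" "snd n u \<in> Inl ` S"
      using d_nonneg by (auto dest: bspec[of _ _ "u + d"])
  next
    fix s assume "(\<forall>s\<in>{0..<d}. snd m s \<in> Inl ` S)
      \<and> (\<forall>u\<in>{0..t - d}. u \<in> fst n \<and> snd n u \<in> Inl ` S)" and "s \<in> {0..t}"
    then show "?G s" by auto
  qed
  also have "\<dots> \<longleftrightarrow> inl_dom S m = fst m \<and> t - d \<in> inl_dom S n"
    unfolding inl_dom_eq_fst_iff using False by (auto simp: inl_dom_def)
  finally show ?thesis
    using False by simp
qed

lemma inl_part_cat_of_not_full: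
  assumes "inl_dom S m \<noteq> fst m"
  shows "inl_part S (cat m n) = inl_part S m"
proof -
  have "t \<in> inl_dom S (cat m n) \<longleftrightarrow> t \<in> inl_dom S m" for t
  proof (cases "t < d")
    case True
    then show ?thesis by (simp add: mem_inl_dom_cat_iff)
  next
    case False
    then have "t \<notin> inl_dom S m"
      using mem_inl_domD[of t S m] fst_m by auto
    with False assms show ?thesis
      by (simp add: mem_inl_dom_cat_iff)
  qed
  then have "inl_dom S (cat m n) = inl_dom S m"
    by blast
  moreover have "snd (cat m n) t = snd m t" if "t \<in> inl_dom S m" for t
    using mem_inl_domD[OF that] by (simp add: snd_cat)
  ultimately show ?thesis
    unfolding inl_part_def by (auto simp: fun_eq_iff)
qed

lemma inl_part_cat_of_full:
  assumes full: "inl_dom S m = fst m"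
  shows "inl_part S (cat m n) = cat (inl_part S m) (inl_part S n)"
proof (rule prod_eqI)
  have dom: "t \<in> inl_dom S (cat m n) \<longleftrightarrow> t \<in> {0..<d} \<or> t - d \<in> inl_dom S n" for t
    using full mem_inl_domD[of "t - d" S n] d_nonneg by (auto simp: mem_inl_dom_cat_iff fst_m)
  have tlen: "tlen {0..<d} = d"
    using d_nonneg by (rule tlen_atLeastLessThan)
  show "fst (inl_part S (cat m n)) = fst (cat (inl_part S m) (inl_part S n))"
    using dom full by (auto simp: inl_part_def fst_cat tlen mem_translation_iff fst_m)
  show "snd (inl_part S (cat m n)) = snd (cat (inl_part S m) (inl_part S n))"
  proof
    fix t
    show "snd (inl_part S (cat m n)) t = snd (cat (inl_part S m) (inl_part S n)) t"
      using dom[of t] mem_inl_domD[of "t - d" S n]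
      by (auto simp: inl_part_def snd_cat tlen full fst_m)
  qed
qed

lemma inl_dom_cat_eq_fst_iff:
  assumes n_nonneg: "fst n \<subseteq> {0..}"
  shows "inl_dom S (cat m n) = fst (cat m n) \<longleftrightarrow> inl_dom S m = fst m \<and> inl_dom S n = fst n"
proof -
  have fst_cat_iff: "t \<in> fst (cat m n) \<longleftrightarrow> t \<in> {0..<d} \<or> t - d \<in> fst n" for t
    by (simp add: fst_cat fst_m tlen_atLeastLessThan d_nonneg mem_translation_iff)
  show ?thesis
  proof
    assume eq: "inl_dom S (cat m n) = fst (cat m n)"
    have "t \<in> inl_dom S m" if "t \<in> fst m" for t
      using eq fst_cat_iff[of t] mem_inl_dom_cat_iff[where S = S and n = n and t = t] that fst_m by auto
    moreover have "u \<in> inl_dom S n" if "u \<in> fst n" for u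
      using eq fst_cat_iff[of "u + d"] mem_inl_dom_cat_iff[where S = S and n = n and t = "u + d"] that n_nonneg
      by auto
    ultimately show "inl_dom S m = fst m \<and> inl_dom S n = fst n"
      using inl_dom_subset by blast
  next
    assume "inl_dom S m = fst m \<and> inl_dom S n = fst n"
    then show "inl_dom S (cat m n) = fst (cat m n)"
      using fst_cat_iff n_nonneg fst_m by (auto simp: mem_inl_dom_cat_iff split: if_splits)
  qed
qed

end

lemma inl_dom_eps: "inl_dom S eps = {}"
  unfolding inl_dom_def eps_def by auto

lemma inl_part_eps: "inl_part S eps = eps"
  unfolding inl_part_def inl_dom_eps by (simp add: eps_def)

lemma tau_Res:
  "tau S (Res m x) = (if inl_dom S m = fst m then Res (inl_part S m) x else Div (inl_part S m))"
  by (simp add: inl_prefix_eq_inl_part inl_part_def)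

lemma tau_Div: "tau S (Div e) = Div (inl_part S e)"
  by (simp add: inl_prefix_eq_inl_part)

lemma tau_eta: "tau S (eta x) = eta x"
  unfolding eta_def tau_Res inl_dom_eps inl_part_eps by (simp add: eps_def)

theorem lemma2:
  fixes S :: "'s set" and Y :: "'y set" and X :: "'x set" and Z :: "'z set"
    and f :: "'x \<Rightarrow> ('s + 'y, 'z) H"
  assumes "f \<in> X \<rightarrow> H_set (S <+> Y) Z"
  shows "(\<forall>x\<in>X. tau S (eta x :: ('s + 'y, 'x) H) = eta x)
       \<and> (\<forall>m\<in>H_set (S <+> Y) X. tau S (kl f m) = kl (\<lambda>x. tau S (f x)) (tau S m))"
proof (intro conjI ballI)
  fix x :: 'x
  show "tau S (eta x :: ('s + 'y, 'x) H) = eta x"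
    by (rule tau_eta)
next
  fix h assume h: "h \<in> H_set (S <+> Y) X"
  show "tau S (kl f h) = kl (\<lambda>x. tau S (f x)) (tau S h)"
  proof (cases h)
    case (Div e)
    then show ?thesis by (simp add: tau_Div del: tau.simps)
  next
    case (Res m x)
    with h obtain d where m: "fst m = {0..<d}" "0 \<le> d" and "x \<in> X"
      unfolding H_set_def is_ftrj_def by auto
    then have "f x \<in> H_set (S <+> Y) Z"
      using assms by auto
    then obtain n where "is_trj (S <+> Y) n" and fx: "f x = Div n \<or> (\<exists>y. f x = Res n y)"
      unfolding H_set_def is_ftrj_def by auto
    then have n: "fst n \<subseteq> {0..}"
      by (simp add: is_trj_nonneg)
    show ?thesis
    proof (cases "inl_dom S m = fst m")
      case True
      with fx show ?thesis
        using Res inl_part_cat_of_full[OF m True] inl_dom_cat_eq_fst_iff[OF m n]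
        by (elim disjE exE) (simp_all add: tau_Res tau_Div del: tau.simps)
    next
      case False
      with fx show ?thesis
        using Res inl_part_cat_of_not_full[OF m False] inl_dom_cat_eq_fst_iff[OF m n]
        by (elim disjE exE) (simp_all add: tau_Res tau_Div del: tau.simps)
    qed
  qed
qed

end
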